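(* In the social learning model, suppose that $G_-$ and $G_+$ are continuous and that the left tail of $G_-$ is convex and differentiable. Suppose $f\colon\mathbb{R}_{>0}\to\mathbb{R}_{>0}$ satisfies $f'(t)=G_-(-f(t))$ for all sufficiently large $t$. Then, conditional on $\theta=+1$, $$\lim_{t\to\infty}\frac{\ell_t}{f(t)}=1$$ with probability $1$.
   Context: Social learning model. A state $\theta\in\{-1,+1\}$ is drawn with $\mathbb{P}(\theta=+1)=\mathbb{P}(\theta=-1)=1/2$. Agents $t=1,2,\dots$ receive private signals $s_t\in\mathbb{R}$ that are i.i.d. conditionally on $\theta$, with CDF $F_+$ if $\theta=+1$ and $F_-$ if $\theta=-1$; $F_+$ and $F_-$ are mutually absolutely continuous. Let $L_t=\log\frac{\mathbb{P}(\theta=+1\mid s_t)}{\mathbb{P}(\theta=-1\mid s_t)}$ be the private log-likelihood ratio, and let $G_+$, $G_-$ denote the CDFs of $L_t$ conditional on $\theta=+1$, $\theta=-1$ respectively. Signals are assumed unbounded: for every $M\in\mathbb{R}$, $\mathbb{P}(L_t>M)>0$ and $\mathbb{P}(L_t<-M)>0$. Agent $t$ observes $a_1,\dots,a_{t-1}$ and her own signal and chooses $a_t\in\{-1,+1\}$ (utility $1$ if $a_t=\theta$, else $0$). The public belief is $\mu_t=\mathbb{P}(\theta=+1\mid a_1,\dots,a_{t-1})$ and $\ell_t=\log\frac{\mu_t}{1-\mu_t}$ (so $\ell_1=0$). In equilibrium $a_t=+1$ iff $\ell_t+L_t>0$, and otherwise $a_t=-1$. Consequently $\ell_{t+1}=\ell_t+D_+(\ell_t)$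 if $a_t=+1$ and $\ell_{t+1}=\ell_t+D_-(\ell_t)$ if $a_t=-1$, where $D_+(x)=\log\frac{1-G_+(-x)}{1-G_-(-x)}$ and $D_-(x)=\log\frac{G_+(-x)}{G_-(-x)}$. We write $\mathbb{P}_+(\cdot)=\mathbb{P}(\cdot\mid\theta=+1)$ and $\mathbb{E}_+$ for the corresponding expectation. "The left tail of $G_-$ is convex and differentiable" means: there exists $x_0\in\mathbb{R}$ such that the restriction of $G_-$ to $(-\infty,x_0)$ is convex and differentiable. *)

theory Defs
  imports "HOL-Probability.Probability"
begin

text \<open>CDF of the private log-likelihood ratio Lf(s) when the signal s has law F.
  With F = F_+ this is G_+, with F = F_- it is G_-.\<close>
definition llr_cdf :: "real measure \<Rightarrow> (real \<Rightarrow> real) \<Rightarrow> real \<Rightarrow> real" where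
  "llr_cdf F Lf x = measure F {s. Lf s \<le> x}"

definition Dplus :: "(real \<Rightarrow> real) \<Rightarrow> (real \<Rightarrow> real) \<Rightarrow> real \<Rightarrow> real" where
  "Dplus Gp Gm x = ln ((1 - Gp (- x)) / (1 - Gm (- x)))"

definition Dminus :: "(real \<Rightarrow> real) \<Rightarrow> (real \<Rightarrow> real) \<Rightarrow> real \<Rightarrow> real" where
  "Dminus Gp Gm x = ln (Gp (- x) / Gm (- x))"

text \<open>Public log-likelihood ratio: pub_llr Gp Gm L t = \<ell>_t for t \<ge> 1, where L t is
  the private log-likelihood ratio of agent t (agents are 1,2,...). Index 0 is a dummy.
  \<ell>_1 = 0; agent t plays +1 iff \<ell>_t + L_t > 0.\<close>
fun pub_llr :: "(real \<Rightarrow> real) \<Rightarrow> (real \<Rightarrow> real) \<Rightarrow> (nat \<Rightarrow> real) \<Rightarrow> nat \<Rightarrow> real" where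
  "pub_llr Gp Gm L 0 = 0"
| "pub_llr Gp Gm L (Suc t) =
     (if t = 0 then 0
      else (let x = pub_llr Gp Gm L t in
            if x + L t > 0 then x + Dplus Gp Gm x else x + Dminus Gp Gm x))"

end

theory Submission
  imports Defs "HOL-Real_Asymp.Real_Asymp"
begin

text \<open>Under the state +1 the likelihood ratio exp(-l_t) of the state -1 is a martingale, so by
  Ville's inequality the public belief l_t rarely falls far after it has reached a high level; and
  while l_t stays in a bounded band, exp(-l_t/2) / \<rho>^t is a supermartingale for some \<rho> < 1, so l_t
  leaves every band. Hence l_t tends to infinity almost surely. From then on every agent plays +1,
  since an action -1 would push l_t below 0, so l_(t+1) = l_t + D_+(l_t), and D_+(x) is asymptotic
  both to G_-(-x) and, by convexity of the tail, to G_-(-x - D_+(x)). Comparing with the ODE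
  f' = G_-(-f): the times \<tau>_t at which f reaches l_t advance by 1 + o(1), so \<tau>_t ~ t, and
  f(\<tau>_t) ~ f(t) because f is concave with t f'(t) \<le> f(t) + O(1).\<close>

section \<open>Comparison with the ODE f' = g(f)\<close>

lemma asymp_linear_of_increments:
  fixes \<tau> :: "nat \<Rightarrow> real" and \<epsilon> :: real
  assumes "\<And>\<delta>. 0 < \<delta> \<Longrightarrow>
    eventually (\<lambda>n. 1 - \<delta> \<le> \<tau> (Suc n) - \<tau> n \<and> \<tau> (Suc n) - \<tau> n \<le> 1 + \<delta>) sequentially"
    and "0 < \<epsilon>"
  shows "eventually (\<lambda>n. (1 - \<epsilon>) * real n \<le> \<tau> n \<and> \<tau> n \<le> (1 + \<epsilon>) * real n) sequentially"
proof -
  define \<delta> where "\<delta> = \<epsilon> / 2"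
  have "0 < \<delta>" using assms(2) by (simp add: \<delta>_def)
  then obtain M where M: "\<And>n. M \<le> n \<Longrightarrow> 1 - \<delta> \<le> \<tau> (Suc n) - \<tau> n \<and> \<tau> (Suc n) - \<tau> n \<le> 1 + \<delta>"
    using assms(1) by (auto simp: eventually_sequentially)
  have linear: "\<tau> M + (1 - \<delta>) * (real n - M) \<le> \<tau> n \<and> \<tau> n \<le> \<tau> M + (1 + \<delta>) * (real n - M)"
    if "M \<le> n" for n
    using that
  proof (induction n rule: dec_induct)
    case (step n)
    then show ?case using M[of n] by (auto simp: algebra_simps)
  qed simp
  have "eventually (\<lambda>n. \<bar>\<tau> M\<bar> + 2 * real M \<le> \<delta> * real n) sequentially"
    using \<open>0 < \<delta>\<close> by real_asymp
  then show ?thesis using eventually_ge_at_top[of M]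
  proof eventually_elim
    case (elim n)
    have "0 \<le> \<delta> * real M" using \<open>0 < \<delta>\<close> by simp
    moreover have "\<epsilon> = 2 * \<delta>" by (simp add: \<delta>_def)
    ultimately show ?case using linear[OF elim(2)] elim(1) by (auto simp: algebra_simps)
  qed
qed

locale antitone_rate_ode =
  fixes f g :: "real \<Rightarrow> real" and T0 :: real
  assumes T0_pos: "0 < T0" and f_T0_pos: "0 < f T0"
    and g_pos: "\<And>x. 0 < g x" and g_le_1: "\<And>x. g x \<le> 1"
    and g_antitone: "\<And>x y. x \<le> y \<Longrightarrow> g y \<le> g x"
    and f_deriv: "\<And>t. T0 \<le> t \<Longrightarrow> (f has_real_derivative g (f t)) (at t)"
begin

lemma mean_value:
  assumes "T0 \<le> a" "a < b"
  obtains z where "a < z" "z < b" "f b - f a = (b - a) * g (f z)"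
  using MVT2[of a b f "\<lambda>t. g (f t)"] assms f_deriv by auto

lemma strict_mono_from: assumes "T0 \<le> a" "a < b" shows "f a < f b"
proof -
  obtain z where "f b - f a = (b - a) * g (f z)" using mean_value[OF assms] .
  moreover have "0 < (b - a) * g (f z)" using assms g_pos by simp
  ultimately show ?thesis by simp
qed

lemma mono_from: assumes "T0 \<le> a" "a \<le> b" shows "f a \<le> f b"
  using strict_mono_from[OF assms(1), of b] assms(2) by (cases "a = b") auto

lemma le_tangent: assumes "T0 \<le> t" "t \<le> u" shows "f u \<le> f t + (u - t) * g (f t)"
proof (cases "t = u")
  case False
  then have tu: "t < u" using assms by simp
  obtain z where z: "t < z" "f u - f t = (u - t) * g (f z)" using mean_value[OF assms(1) tu] .
  have "g (f z) \<le> g (f t)" using mono_from[of t z] z assms by (intro g_antitone) auto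
  then have "(u - t) * g (f z) \<le> (u - t) * g (f t)" using tu by (intro mult_left_mono) auto
  then show ?thesis using z(2) by simp
qed simp

lemma time_rate_le: assumes "T0 \<le> t" shows "t * g (f t) \<le> f t + T0"
proof -
  have T0_g: "T0 * g (f t) \<le> T0" using g_le_1[of "f t"] T0_pos by (simp add: mult_left_le)
  show ?thesis
  proof (cases "t = T0")
    case True
    then show ?thesis using T0_g f_T0_pos by simp
  next
    case False
    then have "T0 < t" using assms by simp
    then obtain z where z: "T0 < z" "z < t" "f t - f T0 = (t - T0) * g (f z)"
      using mean_value[OF order_refl] by blast
    have "g (f t) \<le> g (f z)" using mono_from[of z t] z by (intro g_antitone) auto
    then have "(t - T0) * g (f t) \<le> (t - T0) * g (f z)" using z by (intro mult_left_mono) auto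
    then show ?thesis using T0_g z f_T0_pos by (simp add: algebra_simps)
  qed
qed

lemma exceeds: "\<exists>t\<ge>T0. B < f t"
proof (rule ccontr)
  assume "\<not> ?thesis"
  then have bounded: "\<And>t. T0 \<le> t \<Longrightarrow> f t \<le> B" by (simp add: not_less)
  define t where "t = T0 + (B - f T0 + 1) / g B + 1"
  have "B - f T0 \<ge> 0" using bounded[of T0] by simp
  then have "T0 < t" unfolding t_def using g_pos[of B] by (simp add: add_pos_nonneg)
  then obtain z where z: "T0 < z" "z < t" "f t - f T0 = (t - T0) * g (f z)"
    using mean_value[OF order_refl] by blast
  have "g B \<le> g (f z)" using bounded[of z] z by (intro g_antitone) auto
  then have "(t - T0) * g B \<le> f t - f T0" using z by (simp add: mult_left_mono)
  moreover have "(t - T0) * g B = B - f T0 + 1 + g B" unfolding t_def using g_pos[of B] by (simp add: field_simps)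
  ultimately show False using bounded[of t] g_pos[of B] \<open>T0 < t\<close> by simp
qed

lemma attains: assumes "f T0 \<le> y" obtains t where "T0 \<le> t" "f t = y"
proof -
  obtain b where b: "T0 \<le> b" "y < f b" using exceeds[of y] by blast
  have "continuous_on {T0..b} f"
    using f_deriv DERIV_isCont by (intro continuous_at_imp_continuous_on) fastforce
  then obtain t where "T0 \<le> t" "f t = y" using IVT'[of f T0 y b] assms b by auto
  then show ?thesis using that by blast
qed

lemma filterlim_f_at_top: "filterlim f at_top at_top"
  unfolding filterlim_at_top eventually_at_top_linorder
proof
  fix B
  obtain t where "T0 \<le> t" "B < f t" using exceeds[of B] by blast
  then show "\<exists>t0. \<forall>u\<ge>t0. B \<le> f u" using mono_from[of t] by (intro exI[of _ t]) force
qed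

lemma ratio_bounds:
  fixes \<epsilon> x u :: real
  assumes \<epsilon>: "0 < \<epsilon>" "\<epsilon> \<le> 1/4" and x: "T0 \<le> (1 - 2*\<epsilon>) * x" "2 * T0 \<le> f x"
    and u: "(1 - 2*\<epsilon>) * x \<le> u" "u \<le> (1 + 2*\<epsilon>) * x"
  shows "(1 - 3*\<epsilon>) * f x \<le> f u" "f u \<le> (1 + 3*\<epsilon>) * f x"
proof -
  define t where "t = (1 - 2*\<epsilon>) * x"
  have "T0 \<le> t" "0 < t" using x T0_pos by (auto simp: t_def)
  then have "0 < x" using \<epsilon> by (simp add: t_def zero_less_mult_iff)
  then have tx: "t \<le> x" using \<epsilon> by (simp add: t_def mult_left_le_one_le)
  have "T0 \<le> x" using x(1) tx by (simp add: t_def)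
  have small: "2*\<epsilon>*T0 \<le> \<epsilon> * f x" using mult_left_mono[OF x(2), of \<epsilon>] \<epsilon> by simp
  have "f u \<le> f ((1 + 2*\<epsilon>) * x)" using u x tx by (intro mono_from) (auto simp: t_def)
  also have "\<dots> \<le> f x + 2*\<epsilon> * (x * g (f x))"
    using le_tangent[of x "(1 + 2*\<epsilon>) * x"] \<open>T0 \<le> x\<close> \<open>0 < x\<close> \<epsilon> by (simp add: algebra_simps)
  also have "\<dots> \<le> f x + 2*\<epsilon> * (f x + T0)"
    using time_rate_le[OF \<open>T0 \<le> x\<close>] \<epsilon> by simp
  finally show "f u \<le> (1 + 3*\<epsilon>) * f x" using small by (simp add: algebra_simps)
  have "(1 - 2*\<epsilon>) * f x \<le> (1 - 2*\<epsilon>) * (f t + (x - t) * g (f t))"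
    using le_tangent[OF _ tx] x \<epsilon> by (intro mult_left_mono) (auto simp: t_def)
  also have "\<dots> = (1 - 2*\<epsilon>) * f t + 2*\<epsilon> * (t * g (f t))"
    by (simp add: t_def algebra_simps)
  also have "\<dots> \<le> f t + 2*\<epsilon> * (f t + T0) - 2*\<epsilon> * f t"
    using mult_left_mono[OF time_rate_le[of t], of "2*\<epsilon>"] \<open>T0 \<le> t\<close> \<epsilon> by (simp add: t_def[symmetric] algebra_simps)
  also have "f t \<le> f u" using u x by (intro mono_from) (auto simp: t_def)
  finally show "(1 - 3*\<epsilon>) * f x \<le> f u" using small by (simp add: algebra_simps)
qed

lemma time_step_bounds:
  assumes "T0 \<le> a" "T0 \<le> b" "f b = f a + D" "0 < D"
  shows "D \<le> (b - a) * g (f a)" "(b - a) * g (f b) \<le> D"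
proof -
  have "a < b" using mono_from[of b a] assms by force
  then obtain z where z: "a < z" "z < b" "D = (b - a) * g (f z)"
    using mean_value[OF assms(1)] assms(3) by (metis add_diff_cancel_left')
  have "g (f z) \<le> g (f a)" "g (f b) \<le> g (f z)"
    using z assms(1) by (auto intro!: g_antitone mono_from)
  then show "D \<le> (b - a) * g (f a)" "(b - a) * g (f b) \<le> D"
    using z \<open>a < b\<close> by (simp_all add: mult_left_mono)
qed

lemma tendsto_ratio_of_asymp_linear:
  fixes \<tau> :: "nat \<Rightarrow> real"
  assumes \<tau>: "\<And>\<epsilon>. 0 < \<epsilon> \<Longrightarrow> eventually (\<lambda>n. (1 - \<epsilon>) * real n \<le> \<tau> n \<and> \<tau> n \<le> (1 + \<epsilon>) * real n) sequentially"
  shows "(\<lambda>n. f (\<tau> n) / f (real n)) \<longlonglongrightarrow> 1"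
proof (rule LIMSEQ_I)
  fix r :: real assume "0 < r"
  define \<epsilon> where "\<epsilon> = min (1/4) (r/4)"
  have \<epsilon>: "0 < \<epsilon>" "\<epsilon> \<le> 1/4" "3 * \<epsilon> < r" unfolding \<epsilon>_def using \<open>0 < r\<close> by auto
  have "filterlim (\<lambda>n. f (real n)) at_top sequentially"
    by (rule filterlim_compose[OF filterlim_f_at_top filterlim_real_sequentially])
  then have "eventually (\<lambda>n. 2 * T0 \<le> f (real n)) sequentially"
    by (simp add: filterlim_at_top)
  moreover have "eventually (\<lambda>n. 2 * T0 \<le> (1 - 2*\<epsilon>) * real n) sequentially"
    using \<epsilon> by real_asymp
  moreover have "eventually (\<lambda>n. (1 - 2*\<epsilon>) * real n \<le> \<tau> n \<and> \<tau> n \<le> (1 + 2*\<epsilon>) * real n) sequentially"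
    using \<tau> \<epsilon> by simp
  ultimately have "eventually (\<lambda>n. norm (f (\<tau> n) / f (real n) - 1) < r) sequentially"
  proof eventually_elim
    case (elim n)
    have "T0 \<le> (1 - 2*\<epsilon>) * real n" using elim T0_pos by linarith
    then have "(1 - 3*\<epsilon>) * f (real n) \<le> f (\<tau> n)" "f (\<tau> n) \<le> (1 + 3*\<epsilon>) * f (real n)"
      using ratio_bounds[OF \<epsilon>(1,2)] elim by auto
    moreover have "0 < f (real n)" using elim T0_pos by linarith
    ultimately have "1 - 3*\<epsilon> \<le> f (\<tau> n) / f (real n)" "f (\<tau> n) / f (real n) \<le> 1 + 3*\<epsilon>"
      by (simp_all add: field_simps)
    then show ?case using \<epsilon> by auto
  qed
  then show "\<exists>N. \<forall>n\<ge>N. norm (f (\<tau> n) / f (real n) - 1) < r"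
    by (simp add: eventually_sequentially)
qed

lemma tendsto_of_recursion:
  fixes y :: "nat \<Rightarrow> real" and D :: "real \<Rightarrow> real"
  assumes rec: "eventually (\<lambda>n. y (Suc n) = y n + D (y n)) sequentially"
    and y_lim: "filterlim y at_top sequentially"
    and D_pos: "eventually (\<lambda>x. 0 < D x) at_top"
    and D_lower: "\<And>\<epsilon>. 0 < \<epsilon> \<Longrightarrow> eventually (\<lambda>x. (1 - \<epsilon>) * g x \<le> D x) at_top"
    and D_upper: "\<And>\<epsilon>. 0 < \<epsilon> \<Longrightarrow> eventually (\<lambda>x. D x \<le> (1 + \<epsilon>) * g (x + D x)) at_top"
  shows "(\<lambda>n. y n / f (real n)) \<longlonglongrightarrow> 1"
proof -
  have along_y: "eventually (\<lambda>n. P (y n)) sequentially" if "eventually P at_top" for P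
    using y_lim that by (simp add: filterlim_iff)
  txt \<open>\<tau> n is the time at which the ODE solution reaches y n; one step of the recursion
    advances it by 1 + o(1).\<close>
  define \<tau> where "\<tau> n = (SOME t. T0 \<le> t \<and> f t = y n)" for n
  have "eventually (\<lambda>n. T0 \<le> \<tau> n \<and> f (\<tau> n) = y n) sequentially"
    using along_y[OF eventually_ge_at_top[of "f T0"]]
  proof eventually_elim
    case (elim n)
    show ?case unfolding \<tau>_def by (rule someI_ex) (use attains[OF elim] in blast)
  qed
  note \<tau> = this this[THEN eventually_sequentially_Suc[THEN iffD2]]
  have "eventually (\<lambda>n. 1 - \<epsilon> \<le> \<tau> (Suc n) - \<tau> n \<and> \<tau> (Suc n) - \<tau> n \<le> 1 + \<epsilon>) sequentially"
    if "0 < \<epsilon>" for \<epsilon>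
    using \<tau> rec along_y[OF D_pos] along_y[OF D_lower[OF that]] along_y[OF D_upper[OF that]]
  proof eventually_elim
    case (elim n)
    then have "(1 - \<epsilon>) * g (y n) \<le> (\<tau> (Suc n) - \<tau> n) * g (y n)"
      "(\<tau> (Suc n) - \<tau> n) * g (y (Suc n)) \<le> (1 + \<epsilon>) * g (y (Suc n))"
      using time_step_bounds[of "\<tau> n" "\<tau> (Suc n)" "D (y n)"] by auto
    then show ?case using g_pos[of "y n"] g_pos[of "y (Suc n)"] by (simp add: mult_le_cancel_right)
  qed
  then have "(\<lambda>n. f (\<tau> n) / f (real n)) \<longlonglongrightarrow> 1"
    by (intro tendsto_ratio_of_asymp_linear asymp_linear_of_increments)
  then show ?thesis
    by (rule Lim_transform_eventually) (use \<tau>(1) in \<open>auto elim: eventually_mono\<close>)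
qed

end

section \<open>Histories of actions\<close>

text \<open>A history of n actions is a bool list, most recent action first, True standing for action +1.
  The history [a_n, ..., a_1] generated by the private log-likelihood ratios L 1, ..., L n, when the
  public belief after a history h is lam h, is actions lam L n.\<close>

fun belief :: "(real \<Rightarrow> real) \<Rightarrow> (real \<Rightarrow> real) \<Rightarrow> bool list \<Rightarrow> real" where
  "belief Dp Dm [] = 0"
| "belief Dp Dm (a # h) = belief Dp Dm h + (if a then Dp (belief Dp Dm h) else Dm (belief Dp Dm h))"

fun actions :: "(bool list \<Rightarrow> real) \<Rightarrow> (nat \<Rightarrow> real) \<Rightarrow> nat \<Rightarrow> bool list" where
  "actions lam L 0 = []"
| "actions lam L (Suc n) = (lam (actions lam L n) + L (Suc n) > 0) # actions lam L n"

fun path_prob :: "(bool \<Rightarrow> real \<Rightarrow> real) \<Rightarrow> (bool list \<Rightarrow> real) \<Rightarrow> bool list \<Rightarrow> real" where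
  "path_prob q lam [] = 1"
| "path_prob q lam (a # h) = path_prob q lam h * q a (lam h)"

lemma length_actions [simp]: "length (actions lam L n) = n"
  by (induction n) auto

lemma pub_llr_Suc_eq_belief:
  "pub_llr Gp Gm L (Suc n) = belief (Dplus Gp Gm) (Dminus Gp Gm) (actions (belief (Dplus Gp Gm) (Dminus Gp Gm)) L n)"
  by (induction n) (auto simp: Let_def)

lemma finite_bool_lists_length: "finite {h :: bool list. length h = n}"
  using finite_lists_length_eq[of "UNIV :: bool set" n] by simp

lemma sum_bool_lists_length_Suc:
  "(\<Sum>h\<in>{h :: bool list. length h = Suc n}. F h) = (\<Sum>h\<in>{h. length h = n}. F (True # h) + F (False # h))"
proof -
  have split: "{h :: bool list. length h = Suc n} = (Cons True) ` {h. length h = n} \<union> (Cons False) ` {h. length h = n}"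
    by (auto simp: length_Suc_conv)
  have "(\<Sum>h\<in>{h :: bool list. length h = Suc n}. F h) =
      (\<Sum>h\<in>(Cons True) ` {h. length h = n}. F h) + (\<Sum>h\<in>(Cons False) ` {h. length h = n}. F h)"
    unfolding split by (rule sum.union_disjoint) (auto intro: finite_bool_lists_length)
  also have "\<dots> = (\<Sum>h\<in>{h. length h = n}. F (True # h)) + (\<Sum>h\<in>{h. length h = n}. F (False # h))"
    by (simp add: sum.reindex)
  finally show ?thesis by (simp add: sum.distrib)
qed

lemma supermartingale_expectation_le:
  assumes "\<And>h. q True (lam h) * \<Phi> (True # h) + q False (lam h) * \<Phi> (False # h) \<le> \<Phi> h"
    and "\<And>h. 0 \<le> path_prob q lam h"
  shows "(\<Sum>h\<in>{h. length h = n}. path_prob q lam h * \<Phi> h) \<le> \<Phi> []"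
proof (induction n)
  case 0
  have "{h :: bool list. length h = 0} = {[]}" by auto
  then show ?case by simp
next
  case (Suc n)
  have "(\<Sum>h\<in>{h. length h = Suc n}. path_prob q lam h * \<Phi> h)
     = (\<Sum>h\<in>{h. length h = n}. path_prob q lam h * (q True (lam h) * \<Phi> (True # h) + q False (lam h) * \<Phi> (False # h)))"
    unfolding sum_bool_lists_length_Suc by (simp add: algebra_simps)
  also have "\<dots> \<le> (\<Sum>h\<in>{h. length h = n}. path_prob q lam h * \<Phi> h)"
    by (intro sum_mono mult_left_mono assms)
  finally show ?case using Suc by simp
qed

fun reached :: "(bool list \<Rightarrow> real) \<Rightarrow> real \<Rightarrow> bool list \<Rightarrow> bool" where
  "reached lam K [] = (K \<le> lam [])"
| "reached lam K (a # h) = (reached lam K h \<or> K \<le> lam (a # h))"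

fun fell_after_reaching :: "(bool list \<Rightarrow> real) \<Rightarrow> real \<Rightarrow> real \<Rightarrow> bool list \<Rightarrow> bool" where
  "fell_after_reaching lam K c [] = False"
| "fell_after_reaching lam K c (a # h) = (fell_after_reaching lam K c h \<or> (reached lam K h \<and> lam (a # h) \<le> c))"

fun stays_between :: "(bool list \<Rightarrow> real) \<Rightarrow> real \<Rightarrow> real \<Rightarrow> bool list \<Rightarrow> bool" where
  "stays_between lam m K [] = True"
| "stays_between lam m K (a # h) = (stays_between lam m K h \<and> - m < lam (a # h) \<and> lam (a # h) < K)"

lemma reached_actions_mono:
  assumes "reached lam K (actions lam L j)" "j \<le> n"
  shows "reached lam K (actions lam L n)"
  using assms(2) by (induction n rule: dec_induct) (use assms(1) in simp_all)

lemma exits_band: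
  assumes "\<not> stays_between lam m K (actions lam L n)"
  obtains j where "lam (actions lam L j) \<le> - m \<or> K \<le> lam (actions lam L j)"
  using assms
proof (induction n)
  case (Suc n)
  show ?case
  proof (cases "stays_between lam m K (actions lam L n)")
    case True
    with Suc.prems(2) have "\<not> (- m < lam (actions lam L (Suc n)) \<and> lam (actions lam L (Suc n)) < K)"
      by simp
    then show ?thesis using Suc.prems(1)[of "Suc n"] by linarith
  next
    case False
    then show ?thesis using Suc.IH Suc.prems(1) by blast
  qed
qed simp

lemma reached_of_le: "K \<le> lam h \<Longrightarrow> reached lam K h"
  by (cases h) auto

lemma low_infinitely_often_cases:
  assumes start: "lam [] = 0" and "0 < m"
    and low: "\<And>N. \<exists>n\<ge>N. lam (actions lam L n) \<le> c"
  shows "(\<exists>n. fell_after_reaching lam 0 (- m) (actions lam L n))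
    \<or> (\<forall>n. stays_between lam m K (actions lam L n))
    \<or> (\<exists>n. fell_after_reaching lam K c (actions lam L n))"
proof (rule ccontr)
  assume "\<not> ?thesis"
  then obtain j where never_low: "\<And>n. \<not> fell_after_reaching lam 0 (- m) (actions lam L n)"
    and never_fell: "\<And>n. \<not> fell_after_reaching lam K c (actions lam L n)"
    and j: "lam (actions lam L j) \<le> - m \<or> K \<le> lam (actions lam L j)"
    using exits_band by metis
  have "K \<le> lam (actions lam L j)"
  proof (cases j)
    case 0
    then show ?thesis using j start \<open>0 < m\<close> by auto
  next
    case (Suc i)
    have "reached lam 0 (actions lam L i)"
      using start by (induction i) auto
    then show ?thesis using j never_low[of j] Suc by auto
  qed
  then have "reached lam K (actions lam L j)" by (rule reached_of_le)
  moreover obtain n where "Suc j \<le> n" "lam (actions lam L n) \<le> c" using low by blast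
  moreover from this obtain p where "n = Suc p" "j \<le> p" by (cases n) auto
  ultimately have "fell_after_reaching lam K c (actions lam L n)"
    using reached_actions_mono[of lam K L j p] by auto
  then show False using never_fell by blast
qed

lemma convex_on_chord_le:
  fixes G :: "real \<Rightarrow> real"
  assumes G: "convex_on {..<x0} G" and "u + 1 < x0" "0 \<le> h"
  shows "G u - G (u - h) \<le> h * (G (u + 1) - G u)"
proof -
  define t where "t = h / (1 + h)"
  have t: "0 \<le> t" "t \<le> 1" "1 - t = 1 / (1 + h)" using \<open>0 \<le> h\<close> by (auto simp: t_def field_simps)
  have "(1 - t) * (u - h) + t * (u + 1) = ((u - h) + h * (u + 1)) / (1 + h)"
    unfolding t(3) by (simp add: t_def add_divide_distrib)
  also have "(u - h) + h * (u + 1) = u * (1 + h)" by (simp add: algebra_simps)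
  finally have "(1 - t) *\<^sub>R (u - h) + t *\<^sub>R (u + 1) = u"
    using \<open>0 \<le> h\<close> by simp
  then have "G u \<le> (1 - t) * G (u - h) + t * G (u + 1)"
    using convex_onD[OF G t(1,2), of "u - h" "u + 1"] assms by auto
  then have "(1 + h) * G u \<le> (1 + h) * ((1 - t) * G (u - h) + t * G (u + 1))"
    using \<open>0 \<le> h\<close> by (intro mult_left_mono) auto
  also have "\<dots> = ((1 + h) * (1 - t)) * G (u - h) + ((1 + h) * t) * G (u + 1)"
    by (simp add: algebra_simps)
  also have "\<dots> = G (u - h) + h * G (u + 1)"
    unfolding t(3) using \<open>0 \<le> h\<close> by (simp add: t_def)
  finally show ?thesis by (simp add: algebra_simps)
qed

lemma sqrt_mult_le_mean:
  assumes "0 \<le> u" "u \<le> 1" "0 \<le> v" "v \<le> 1"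
  shows "sqrt (u * v) \<le> (u + v) / 2 - (u - v)^2 / 8"
proof -
  define p q where "p = sqrt u" and "q = sqrt v"
  have p: "0 \<le> p" "p \<le> 1" "u = p^2" and q: "0 \<le> q" "q \<le> 1" "v = q^2"
    using assms by (auto simp: p_def q_def)
  have "(u - v)^2 = (p - q)^2 * (p + q)^2" using p q by (simp add: power2_eq_square algebra_simps)
  also have "\<dots> \<le> (p - q)^2 * 4"
    using power_mono[of "p + q" 2 2] p q by (intro mult_left_mono) auto
  finally have "(u - v)^2 / 8 \<le> (p - q)^2 / 2" by simp
  moreover have "(u + v) / 2 - (p - q)^2 / 2 = sqrt (u * v)"
    using p q by (simp add: real_sqrt_mult power2_eq_square field_simps)
  ultimately show ?thesis by linarith
qed

lemma bernoulli_bhattacharyya_le: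
  fixes a b :: real
  assumes "0 \<le> a" "a \<le> 1" "0 \<le> b" "b \<le> 1"
  shows "sqrt ((1 - a) * (1 - b)) + sqrt (a * b) \<le> 1 - (a - b)^2 / 4"
proof -
  have "((1 - a) - (1 - b))^2 = (a - b)^2" by (simp add: power2_eq_square algebra_simps)
  then have "sqrt ((1 - a) * (1 - b)) \<le> ((1 - a) + (1 - b)) / 2 - (a - b)^2 / 8"
    using sqrt_mult_le_mean[of "1 - a" "1 - b"] assms by auto
  moreover have "sqrt (a * b) \<le> (a + b) / 2 - (a - b)^2 / 8"
    using assms by (intro sqrt_mult_le_mean) auto
  ultimately show ?thesis by (simp add: field_simps)
qed

section \<open>The social learning model under the state +1\<close>

locale social_learning =
  fixes Fp Fm :: "real measure" and Lf :: "real \<Rightarrow> real" and M :: "'a measure"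
    and s :: "nat \<Rightarrow> 'a \<Rightarrow> real"
  assumes Fp_prob: "prob_space Fp" and Fp_sets: "sets Fp = sets borel"
    and Fm_prob: "prob_space Fm" and Fm_sets: "sets Fm = sets borel"
    and ac_Fm_Fp: "absolutely_continuous Fm Fp" and ac_Fp_Fm: "absolutely_continuous Fp Fm"
    and Lf_meas: "Lf \<in> borel_measurable borel"
    and Lf_llr: "Fp = density Fm (\<lambda>x. ennreal (exp (Lf x)))"
    and unbounded: "\<forall>B::real.
        (measure Fp {x. Lf x > B} + measure Fm {x. Lf x > B}) / 2 > 0 \<and>
        (measure Fp {x. Lf x < - B} + measure Fm {x. Lf x < - B}) / 2 > 0"
    and M_prob: "prob_space M"
    and s_indep: "prob_space.indep_vars M (\<lambda>_. borel) s UNIV"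
    and s_distr: "\<forall>i. distr M borel (s i) = Fp"
begin

sublocale Fp: prob_space Fp by (rule Fp_prob)
sublocale Fm: prob_space Fm by (rule Fm_prob)
sublocale M: prob_space M by (rule M_prob)

abbreviation "Gp \<equiv> llr_cdf Fp Lf"
abbreviation "Gm \<equiv> llr_cdf Fm Lf"

lemma space_Fp: "space Fp = UNIV" and space_Fm: "space Fm = UNIV"
  using Fp_sets Fm_sets by (metis sets_eq_imp_space_eq space_borel)+

lemma sets_Lf:
  "{y. Lf y \<le> c} \<in> sets borel" "{y. Lf y < c} \<in> sets borel" "{y. c < Lf y} \<in> sets borel"
  "{y. c \<le> Lf y} \<in> sets borel" "{y. c' < Lf y \<and> Lf y \<le> c} \<in> sets borel"
  using Lf_meas by measurable

lemma sets_Fp_Lf: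
  "{y. Lf y \<le> c} \<in> sets Fp" "{y. c < Lf y} \<in> sets Fp"
  using sets_Lf Fp_sets by auto

lemma sets_Fm_Lf:
  "{y. Lf y \<le> c} \<in> sets Fm" "{y. Lf y < c} \<in> sets Fm" "{y. c < Lf y} \<in> sets Fm"
  using sets_Lf Fm_sets by auto

lemma emeasure_Fp_density:
  "A \<in> sets borel \<Longrightarrow> emeasure Fp A = (\<integral>\<^sup>+y. ennreal (exp (Lf y)) * indicator A y \<partial>Fm)"
  using emeasure_density[of "\<lambda>x. ennreal (exp (Lf x))" Fm A] Lf_meas Fm_sets Lf_llr
  by (simp add: measurable_cong_sets[OF Fm_sets refl])

lemma measure_Fp_le_exp:
  assumes "A \<in> sets borel" "A \<subseteq> {y. Lf y \<le> c}"
  shows "measure Fp A \<le> exp c * measure Fm A"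
proof -
  have "emeasure Fp A \<le> (\<integral>\<^sup>+y. ennreal (exp c) * indicator A y \<partial>Fm)"
    unfolding emeasure_Fp_density[OF assms(1)]
    by (intro nn_integral_mono) (use assms(2) in \<open>auto split: split_indicator\<close>)
  also have "\<dots> = ennreal (exp c) * emeasure Fm A"
    using assms Fm_sets by (simp add: nn_integral_cmult_indicator)
  finally show ?thesis
    by (simp add: Fp.emeasure_eq_measure Fm.emeasure_eq_measure ennreal_mult[symmetric] ennreal_le_iff)
qed

lemma measure_Fp_ge_exp:
  assumes "A \<in> sets borel" "A \<subseteq> {y. c \<le> Lf y}"
  shows "exp c * measure Fm A \<le> measure Fp A"
proof -
  have "ennreal (exp c) * emeasure Fm A = (\<integral>\<^sup>+y. ennreal (exp c) * indicator A y \<partial>Fm)"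
    using assms Fm_sets by (simp add: nn_integral_cmult_indicator)
  also have "\<dots> \<le> emeasure Fp A"
    unfolding emeasure_Fp_density[OF assms(1)]
    by (intro nn_integral_mono) (use assms(2) in \<open>auto split: split_indicator\<close>)
  finally show ?thesis
    by (simp add: Fp.emeasure_eq_measure Fm.emeasure_eq_measure ennreal_mult[symmetric] ennreal_le_iff)
qed

lemma measure_pos_of_sum_pos:
  assumes "A \<in> sets borel" "measure Fp A + measure Fm A > 0"
  shows "measure Fp A > 0" "measure Fm A > 0"
proof -
  have "measure Fp A = 0 \<longleftrightarrow> measure Fm A = 0"
    using ac_Fm_Fp ac_Fp_Fm assms(1) Fp_sets Fm_sets
    by (auto simp: absolutely_continuous_def Fp.emeasure_eq_measure Fm.emeasure_eq_measure null_sets_def)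
  then show "measure Fp A > 0" "measure Fm A > 0"
    using assms(2) measure_nonneg[of Fp A] measure_nonneg[of Fm A] by linarith+
qed

lemma measure_Lf_gt_eq: "measure Fp {y. c < Lf y} = 1 - Gp c" "measure Fm {y. c < Lf y} = 1 - Gm c"
proof -
  have "{y. c < Lf y} = UNIV - {y. Lf y \<le> c}" by auto
  then show "measure Fp {y. c < Lf y} = 1 - Gp c" "measure Fm {y. c < Lf y} = 1 - Gm c"
    unfolding llr_cdf_def using Fp.prob_compl Fm.prob_compl space_Fp space_Fm sets_Fp_Lf sets_Fm_Lf
    by auto
qed

lemma cdf_bounds: "0 < Gp c" "Gp c < 1" "0 < Gm c" "Gm c < 1"
proof -
  have "measure Fp {y. Lf y < c} \<le> Gp c" "measure Fm {y. Lf y < c} \<le> Gm c"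
    unfolding llr_cdf_def using sets_Fp_Lf sets_Fm_Lf
    by (auto intro!: Fp.finite_measure_mono Fm.finite_measure_mono)
  moreover have "measure Fp {y. Lf y < c} + measure Fm {y. Lf y < c} > 0"
    using unbounded[rule_format, of "- c"] by simp
  ultimately show "0 < Gp c" "0 < Gm c"
    using measure_pos_of_sum_pos[OF sets_Lf(2)] by fastforce+
  have "measure Fp {y. c < Lf y} + measure Fm {y. c < Lf y} > 0"
    using unbounded[rule_format, of c] by simp
  then show "Gp c < 1" "Gm c < 1"
    using measure_pos_of_sum_pos[OF sets_Lf(3)] measure_Lf_gt_eq by fastforce+
qed

lemma Gm_mono: "x \<le> y \<Longrightarrow> Gm x \<le> Gm y"
  unfolding llr_cdf_def by (rule Fm.finite_measure_mono) (auto intro: sets_Fm_Lf)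

lemma Gp_le_exp_Gm: "Gp c \<le> exp c * Gm c"
  unfolding llr_cdf_def by (rule measure_Fp_le_exp[OF sets_Lf(1)]) simp

lemma exp_tail_le_tail: "exp c * (1 - Gm c) \<le> 1 - Gp c"
  unfolding measure_Lf_gt_eq[symmetric] by (rule measure_Fp_ge_exp[OF sets_Lf(3)]) auto

lemma measure_Lf_interval:
  assumes "c' \<le> c"
  shows "measure Fp {y. c' < Lf y \<and> Lf y \<le> c} = Gp c - Gp c'"
    "measure Fm {y. c' < Lf y \<and> Lf y \<le> c} = Gm c - Gm c'"
proof -
  have "{y. c' < Lf y \<and> Lf y \<le> c} = {y. Lf y \<le> c} - {y. Lf y \<le> c'}"
    and "{y. Lf y \<le> c'} \<subseteq> {y. Lf y \<le> c}" using assms by auto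
  then show "measure Fp {y. c' < Lf y \<and> Lf y \<le> c} = Gp c - Gp c'"
    "measure Fm {y. c' < Lf y \<and> Lf y \<le> c} = Gm c - Gm c'"
    unfolding llr_cdf_def using sets_Fp_Lf sets_Fm_Lf
    by (simp_all add: Fp.finite_measure_Diff Fm.finite_measure_Diff)
qed

lemma cdf_gap_mono_nonpos:
  assumes "c' \<le> c" "c \<le> 0"
  shows "Gm c' - Gp c' \<le> Gm c - Gp c"
proof -
  have "measure Fp {y. c' < Lf y \<and> Lf y \<le> c} \<le> exp c * measure Fm {y. c' < Lf y \<and> Lf y \<le> c}"
    by (rule measure_Fp_le_exp[OF sets_Lf(5)]) auto
  also have "\<dots> \<le> measure Fm {y. c' < Lf y \<and> Lf y \<le> c}"
    using assms by (intro mult_left_le_one_le) auto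
  finally show ?thesis using measure_Lf_interval[OF assms(1)] by simp
qed

lemma cdf_gap_antimono_nonneg:
  assumes "c \<le> c'" "0 \<le> c"
  shows "Gm c' - Gp c' \<le> Gm c - Gp c"
proof -
  have "measure Fm {y. c < Lf y \<and> Lf y \<le> c'} \<le> exp c * measure Fm {y. c < Lf y \<and> Lf y \<le> c'}"
    using assms by (intro mult_le_cancel_right1[THEN iffD2]) auto
  also have "\<dots> \<le> measure Fp {y. c < Lf y \<and> Lf y \<le> c'}"
    by (rule measure_Fp_ge_exp[OF sets_Lf(5)]) auto
  finally show ?thesis using measure_Lf_interval[OF assms(1)] by simp
qed

lemma cdf_gap_lower_bound:
  assumes "0 < m" "0 < K" "- m < x" "x < K"
  shows "min ((1 - exp (- K)) * Gm (- K)) ((exp m - 1) * (1 - Gm m)) \<le> Gm (- x) - Gp (- x)"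
proof (cases "x \<ge> 0")
  case True
  then have "Gm (- K) - Gp (- K) \<le> Gm (- x) - Gp (- x)"
    using cdf_gap_mono_nonpos[of "- K" "- x"] assms by simp
  then show ?thesis using Gp_le_exp_Gm[of "- K"] by (simp add: algebra_simps min_le_iff_disj)
next
  case False
  then have "Gm m - Gp m \<le> Gm (- x) - Gp (- x)"
    using cdf_gap_antimono_nonneg[of "- x" m] assms by simp
  then show ?thesis using exp_tail_le_tail[of m] by (simp add: algebra_simps min_le_iff_disj)
qed

lemma Gm_neg_tendsto_0: "((\<lambda>x. Gm (- x)) \<longlongrightarrow> 0) at_top"
proof -
  have Lf_Fm: "Lf \<in> measurable Fm borel"
    using Lf_meas by (simp add: measurable_cong_sets[OF Fm_sets refl])
  interpret Lf_distr: real_distribution "distr Fm borel Lf"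
    by (auto simp: real_distribution_def real_distribution_axioms_def intro!: Fm.prob_space_distr Lf_Fm)
  have "cdf (distr Fm borel Lf) = Gm"
    by (auto simp: fun_eq_iff cdf_def llr_cdf_def measure_distr[OF Lf_Fm] space_Fm vimage_def)
  then show ?thesis
    using filterlim_compose[OF Lf_distr.cdf_lim_at_bot filterlim_uminus_at_bot_at_top] by simp
qed

abbreviation "Dp \<equiv> Dplus Gp Gm"
abbreviation "Dm \<equiv> Dminus Gp Gm"

lemma exp_Dplus: "exp (Dp x) = (1 - Gp (- x)) / (1 - Gm (- x))"
  using cdf_bounds[of "- x"] unfolding Dplus_def by simp

lemma exp_Dminus: "exp (Dm x) = Gp (- x) / Gm (- x)"
  using cdf_bounds[of "- x"] unfolding Dminus_def by simp

lemma Dminus_le: "Dm x \<le> - x"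
proof -
  have "Gp (- x) / Gm (- x) \<le> exp (- x)"
    using Gp_le_exp_Gm[of "- x"] cdf_bounds[of "- x"] by (simp add: divide_le_eq)
  then show ?thesis using exp_Dminus[of x] by (metis exp_le_cancel_iff)
qed

lemma Dplus_le: "Dp x \<le> Gm (- x) / (1 - Gm (- x))"
proof -
  have pos: "0 < 1 - Gp (- x)" "0 < 1 - Gm (- x)" using cdf_bounds[of "- x"] by auto
  have "Dp x = ln (1 - Gp (- x)) - ln (1 - Gm (- x))"
    unfolding Dplus_def using pos by (simp add: ln_div)
  also have "\<dots> \<le> ((1 - Gp (- x)) - (1 - Gm (- x))) / (1 - Gm (- x))"
    by (rule ln_diff_le[OF pos])
  also have "\<dots> \<le> Gm (- x) / (1 - Gm (- x))" using pos cdf_bounds[of "- x"] by (intro divide_right_mono) auto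
  finally show ?thesis .
qed

lemma Dplus_ge:
  assumes "0 \<le> x"
  shows "(1 - exp (- x)) * Gm (- x) \<le> Dp x"
proof -
  have pos: "0 < 1 - Gp (- x)" "0 < 1 - Gm (- x)" using cdf_bounds[of "- x"] by auto
  have Gp_le: "Gp (- x) \<le> exp (- x) * Gm (- x)" by (rule Gp_le_exp_Gm)
  also have "\<dots> \<le> Gm (- x)" using assms cdf_bounds[of "- x"] by (intro mult_left_le_one_le) auto
  finally have "Gm (- x) - Gp (- x) \<le> (Gm (- x) - Gp (- x)) / (1 - Gp (- x))"
    using pos cdf_bounds[of "- x"] by (simp add: le_divide_eq mult_right_le_one_le)
  also have "\<dots> = ((1 - Gm (- x)) - (1 - Gp (- x))) / (1 - Gp (- x)) * (- 1)"
    by (simp add: field_simps)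
  also have "\<dots> \<le> - (ln (1 - Gm (- x)) - ln (1 - Gp (- x)))"
    using ln_diff_le[OF pos(2,1)] by linarith
  also have "\<dots> = Dp x" unfolding Dplus_def using pos by (simp add: ln_div)
  finally show ?thesis using Gp_le by (simp add: algebra_simps)
qed

lemma eventually_Dplus_pos: "eventually (\<lambda>x. 0 < Dp x) at_top"
  using eventually_gt_at_top[of 0]
proof eventually_elim
  case (elim x)
  have "0 < (1 - exp (- x)) * Gm (- x)" using elim cdf_bounds[of "- x"] by simp
  then show ?case using Dplus_ge[of x] elim by simp
qed

lemma eventually_Dplus_ge:
  assumes "0 < \<epsilon>"
  shows "eventually (\<lambda>x. (1 - \<epsilon>) * Gm (- x) \<le> Dp x) at_top"
proof -
  have "((\<lambda>x::real. exp (- x)) \<longlongrightarrow> 0) at_top" by real_asymp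
  from order_tendstoD(2)[OF this assms] show ?thesis using eventually_ge_at_top[of 0]
  proof eventually_elim
    case (elim x)
    have "(1 - \<epsilon>) * Gm (- x) \<le> (1 - exp (- x)) * Gm (- x)"
      using elim cdf_bounds[of "- x"] by (intro mult_right_mono) auto
    then show ?case using Dplus_ge[OF elim(2)] by linarith
  qed
qed

text \<open>Convexity of the left tail of G_- is used only here: the step D = D_+(x) is small and
  the chord slope of G_- on [-x-D, -x] is at most G_-(-x+1) - G_-(-x), so that
  G_-(-x) and G_-(-x-D) differ by a factor 1 + o(1).\<close>
lemma eventually_Dplus_le:
  assumes convex: "convex_on {..<x0} Gm" and "0 < \<epsilon>"
  shows "eventually (\<lambda>x. Dp x \<le> (1 + \<epsilon>) * Gm (- (x + Dp x))) at_top"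
proof -
  define e where "e = min \<epsilon> 1"
  have e: "0 < e" "e \<le> 1" "e \<le> \<epsilon>" unfolding e_def using assms(2) by auto
  obtain N where N: "\<And>x. N \<le> x \<Longrightarrow> Gm (- x) < e / 4"
    using order_tendstoD(2)[OF Gm_neg_tendsto_0, of "e / 4"] e by (auto simp: eventually_at_top_linorder)
  then have "eventually (\<lambda>x. Gm (- x) < e / 4 \<and> Gm (- (x - 1)) < e / 4) at_top"
    unfolding eventually_at_top_linorder using N[of "_ - 1"] by (intro exI[of _ "N + 1"]) auto
  then show ?thesis using eventually_ge_at_top[of "max 0 (2 - x0)"]
  proof eventually_elim
    case (elim x)
    define D where "D = Dp x"
    have gx: "0 < Gm (- x)" and g1: "0 < Gm (- (x - 1))" using cdf_bounds by auto
    have "0 \<le> (1 - exp (- x)) * Gm (- x)" using elim gx by simp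
    then have "0 \<le> D" using Dplus_ge[of x] elim by (simp add: D_def)
    have step: "D * (1 - Gm (- x)) \<le> Gm (- x)"
      using Dplus_le[of x] cdf_bounds[of "- x"] by (simp add: D_def le_divide_eq)
    have "Gm (- x) - Gm (- x - D) \<le> D * (Gm (- x + 1) - Gm (- x))"
      by (rule convex_on_chord_le[OF convex]) (use elim \<open>0 \<le> D\<close> in auto)
    moreover have "0 \<le> D * Gm (- x)" using \<open>0 \<le> D\<close> gx by simp
    ultimately have chord: "Gm (- x) - Gm (- x - D) \<le> D * Gm (- (x - 1))"
      by (simp add: algebra_simps)
    have "e * Gm (- x) \<le> Gm (- x)" using e gx by (intro mult_left_le_one_le) auto
    then have "D * (1 + e / 2) \<le> D * ((1 + e) * (1 - Gm (- x)))"
      using \<open>0 \<le> D\<close> elim e by (intro mult_left_mono) (auto simp: algebra_simps)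
    also have "\<dots> \<le> (1 + e) * Gm (- x)"
      using mult_left_mono[OF step, of "1 + e"] e by (simp add: algebra_simps)
    finally have near_x: "D * (1 + e / 2) \<le> (1 + e) * Gm (- x)" .
    have "e * Gm (- (x - 1)) \<le> Gm (- (x - 1))" using e g1 by (intro mult_left_le_one_le) auto
    then have "D * ((1 + e) * Gm (- (x - 1))) \<le> D * (e / 2)"
      using \<open>0 \<le> D\<close> elim by (intro mult_left_mono) (auto simp: algebra_simps)
    with near_x have "D \<le> (1 + e) * (Gm (- x) - D * Gm (- (x - 1)))"
      by (simp add: algebra_simps)
    also have "\<dots> \<le> (1 + e) * Gm (- x - D)" using chord e by (intro mult_left_mono) auto
    also have "\<dots> \<le> (1 + \<epsilon>) * Gm (- x - D)"
      using e cdf_bounds(3)[of "- x - D"] by (intro mult_right_mono) auto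
    finally show ?case by (simp add: D_def)
  qed
qed

abbreviation "lam \<equiv> belief Dp Dm"
abbreviation "hist \<omega> \<equiv> actions lam (\<lambda>n. Lf (s n \<omega>))"

definition act_prob :: "bool \<Rightarrow> real \<Rightarrow> real" where
  "act_prob a x = measure Fp {y. (x + Lf y > 0) = a}"

abbreviation "hist_prob \<equiv> path_prob act_prob lam"

lemma act_prob_True: "act_prob True x = 1 - Gp (- x)"
proof -
  have "{y. (x + Lf y > 0) = True} = {y. - x < Lf y}" by auto
  then show ?thesis using measure_Lf_gt_eq(1)[of "- x"] by (simp add: act_prob_def)
qed

lemma act_prob_False: "act_prob False x = Gp (- x)"
proof -
  have "{y. (x + Lf y > 0) = False} = {y. Lf y \<le> - x}" by auto
  then show ?thesis by (simp add: act_prob_def llr_cdf_def)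
qed

lemma hist_prob_nonneg: "0 \<le> hist_prob h"
  by (induction h) (simp_all add: act_prob_def)

definition signal_set :: "bool list \<Rightarrow> nat \<Rightarrow> real set" where
  "signal_set h j = {y. (lam (drop (length h + 1 - j) h) + Lf y > 0) = h ! (length h - j)}"

lemma signal_set_borel: "signal_set h j \<in> sets borel"
proof -
  have "signal_set h j = {y \<in> space borel. (lam (drop (length h + 1 - j) h) + Lf y > 0) = h ! (length h - j)}"
    by (simp add: signal_set_def)
  also have "\<dots> \<in> sets borel" using Lf_meas by measurable
  finally show ?thesis .
qed

lemma signal_set_Cons: "j \<in> {1..length h} \<Longrightarrow> signal_set (a # h) j = signal_set h j"
  by (simp add: signal_set_def Suc_diff_le)

lemma hist_eq_iff:
  "hist \<omega> n = h \<longleftrightarrow> length h = n \<and> (\<forall>j\<in>{1..n}. s j \<omega> \<in> signal_set h j)"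
proof (induction n arbitrary: h)
  case (Suc n)
  show ?case
  proof (cases h)
    case (Cons a h')
    show ?thesis
    proof (cases "length h' = n")
      case True
      have "{1..Suc n} = insert (Suc n) {1..n}" by auto
      moreover have "signal_set (a # h') (Suc n) = {y. (lam h' + Lf y > 0) = a}"
        using True by (simp add: signal_set_def)
      ultimately have "(\<forall>j\<in>{1..Suc n}. s j \<omega> \<in> signal_set h j) \<longleftrightarrow>
          (\<forall>j\<in>{1..n}. s j \<omega> \<in> signal_set h' j) \<and> (lam h' + Lf (s (Suc n) \<omega>) > 0) = a"
        using signal_set_Cons[of _ h' a] True Cons by auto
      then show ?thesis using Suc.IH[of h'] Cons True by (auto simp del: belief.simps)
    qed (use Cons in \<open>auto dest: arg_cong[of _ _ length]\<close>)
  qed simp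
qed auto

lemma prod_signal_set: "(\<Prod>j\<in>{1..length h}. measure Fp (signal_set h j)) = hist_prob h"
proof (induction h)
  case (Cons a h)
  have "{1..length (a # h)} = insert (Suc (length h)) {1..length h}" by auto
  then show ?case using Cons signal_set_Cons[of _ h a]
    by (simp add: signal_set_def act_prob_def mult.commute)
qed simp

lemma s_measurable: "s j \<in> measurable M borel"
  using s_indep unfolding M.indep_vars_def2 by auto

lemma sets_hist_eq: "{\<omega>\<in>space M. hist \<omega> n = h} \<in> sets M"
proof -
  have "{\<omega>\<in>space M. hist \<omega> n = h} = {\<omega>\<in>space M. length h = n \<and> (\<forall>j\<in>{1..n}. s j \<omega> \<in> signal_set h j)}"
    by (simp add: hist_eq_iff)
  also have "\<dots> \<in> sets M" using s_measurable signal_set_borel by measurable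
  finally show ?thesis .
qed

lemma prob_hist_eq:
  assumes "length h = n"
  shows "M.prob {\<omega>\<in>space M. hist \<omega> n = h} = hist_prob h"
proof (cases "n = 0")
  case False
  have indep: "M.indep_sets (\<lambda>i. {s i -` A \<inter> space M | A. A \<in> sets borel}) UNIV"
    using s_indep unfolding M.indep_vars_def2 by auto
  have "{\<omega>\<in>space M. hist \<omega> n = h} = (\<Inter>j\<in>{1..n}. s j -` signal_set h j \<inter> space M)"
    using assms False by (auto simp: hist_eq_iff)
  moreover have "M.prob (\<Inter>j\<in>{1..n}. s j -` signal_set h j \<inter> space M)
      = (\<Prod>j\<in>{1..n}. M.prob (s j -` signal_set h j \<inter> space M))"
    by (rule M.indep_setsD[OF indep]) (use False signal_set_borel in auto)
  ultimately have "M.prob {\<omega>\<in>space M. hist \<omega> n = h} = (\<Prod>j\<in>{1..n}. M.prob (s j -` signal_set h j \<inter> space M))"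
    by simp
  also have "\<dots> = (\<Prod>j\<in>{1..n}. measure Fp (signal_set h j))"
    using s_distr s_measurable signal_set_borel by (intro prod.cong refl) (metis measure_distr sets_borel)
  finally show ?thesis using prod_signal_set[of h] assms by simp
qed (use assms M.prob_space in simp)

lemma prob_hist_in: "M.prob {\<omega>\<in>space M. hist \<omega> n \<in> S} = (\<Sum>h\<in>{h. length h = n} \<inter> S. hist_prob h)"
proof -
  have eq: "{\<omega>\<in>space M. hist \<omega> n \<in> S} = (\<Union>h\<in>{h. length h = n} \<inter> S. {\<omega>\<in>space M. hist \<omega> n = h})"
    by auto
  have "M.prob (\<Union>h\<in>{h. length h = n} \<inter> S. {\<omega>\<in>space M. hist \<omega> n = h})
      = (\<Sum>h\<in>{h. length h = n} \<inter> S. M.prob {\<omega>\<in>space M. hist \<omega> n = h})"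
    using finite_bool_lists_length sets_hist_eq
    by (intro M.finite_measure_finite_Union) (auto simp: disjoint_family_on_def)
  then show ?thesis unfolding eq by (simp add: prob_hist_eq)
qed

lemma sets_hist_in: "{\<omega>\<in>space M. hist \<omega> n \<in> S} \<in> sets M"
proof -
  have "{\<omega>\<in>space M. hist \<omega> n \<in> S} = (\<Union>h\<in>{h. length h = n} \<inter> S. {\<omega>\<in>space M. hist \<omega> n = h})"
    by auto
  then show ?thesis using sets_hist_eq finite_bool_lists_length by (auto intro!: sets.finite_UN)
qed

lemma prob_hist_le_supermartingale:
  assumes "\<And>h. length h = n \<Longrightarrow> h \<in> S \<Longrightarrow> 1 \<le> \<Phi> h" "\<And>h. 0 \<le> \<Phi> h"
    and "\<And>h. act_prob True (lam h) * \<Phi> (True # h) + act_prob False (lam h) * \<Phi> (False # h) \<le> \<Phi> h"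
  shows "M.prob {\<omega>\<in>space M. hist \<omega> n \<in> S} \<le> \<Phi> []"
proof -
  have "M.prob {\<omega>\<in>space M. hist \<omega> n \<in> S} \<le> (\<Sum>h\<in>{h. length h = n} \<inter> S. hist_prob h * \<Phi> h)"
    unfolding prob_hist_in using assms(1) hist_prob_nonneg
    by (intro sum_mono) (metis IntD1 IntD2 mem_Collect_eq mult_left_mono mult.right_neutral)
  also have "\<dots> \<le> (\<Sum>h\<in>{h. length h = n}. hist_prob h * \<Phi> h)"
    using finite_bool_lists_length hist_prob_nonneg assms(2) by (intro sum_mono2) auto
  also have "\<dots> \<le> \<Phi> []"
    using assms(3) hist_prob_nonneg by (rule supermartingale_expectation_le)
  finally show ?thesis .
qed

section \<open>Almost sure divergence of the public belief\<close>

lemma act_prob_nonneg: "0 \<le> act_prob a x"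
  by (simp add: act_prob_def)

lemma act_prob_sum: "act_prob True x + act_prob False x = 1"
  by (simp add: act_prob_True act_prob_False)

lemma exp_neg_belief_martingale:
  "act_prob True x * exp (- (x + Dp x)) + act_prob False x * exp (- (x + Dm x)) = exp (- x)"
proof -
  have "act_prob True x * exp (- (x + Dp x)) = exp (- x) * (1 - Gm (- x))"
    "act_prob False x * exp (- (x + Dm x)) = exp (- x) * Gm (- x)"
    using cdf_bounds[of "- x"]
    by (simp_all add: act_prob_True act_prob_False exp_diff exp_minus exp_Dplus exp_Dminus field_simps)
  then show ?thesis by (simp add: algebra_simps)
qed

lemma mult_exp_neg_half_ln: "0 < a \<Longrightarrow> 0 < b \<Longrightarrow> a * exp (- ln (a / b) / 2) = sqrt (a * b)"
proof -
  assume "0 < a" "0 < b"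
  then have "exp (- ln (a / b) / 2) = sqrt (b / a)"
    by (simp add: ln_div powr_def powr_half_sqrt[symmetric] algebra_simps)
  then have "a * exp (- ln (a / b) / 2) = sqrt (a^2 * (b / a))"
    using \<open>0 < a\<close> by (simp only: real_sqrt_mult) simp
  then show ?thesis using \<open>0 < a\<close> by (simp add: power2_eq_square)
qed

lemma exp_neg_half_belief_step:
  "act_prob True x * exp (- (x + Dp x) / 2) + act_prob False x * exp (- (x + Dm x) / 2)
    = exp (- x / 2) * (sqrt ((1 - Gp (- x)) * (1 - Gm (- x))) + sqrt (Gp (- x) * Gm (- x)))"
proof -
  have split: "a * exp (- (x + D) / 2) = exp (- x / 2) * (a * exp (- D / 2))" for a D
    by (simp add: exp_add[symmetric] field_simps)
  show ?thesis
    unfolding split act_prob_True act_prob_False Dplus_def Dminus_def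
    using mult_exp_neg_half_ln[of "1 - Gp (- x)" "1 - Gm (- x)"] mult_exp_neg_half_ln[of "Gp (- x)" "Gm (- x)"]
      cdf_bounds[of "- x"]
    by (simp add: distrib_left)
qed

lemma act_prob_convex_le:
  "u \<le> B \<Longrightarrow> v \<le> B \<Longrightarrow> act_prob True x * u + act_prob False x * v \<le> B"
  by (rule convex_bound_le) (use act_prob_nonneg act_prob_sum in auto)

lemma exp_diff_eq_mult: "exp (c - y) = exp c * exp (- y :: real)"
  using exp_add[of c "- y"] by simp

text \<open>Ville's inequality for the martingale exp(c - l_t), started when l_t first reaches K.\<close>
lemma prob_fell_after_reaching_le:
  assumes "c < K"
  shows "M.prob {\<omega>\<in>space M. hist \<omega> n \<in> {h. fell_after_reaching lam K c h}} \<le> exp (c - K)"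
proof -
  define \<Phi> where "\<Phi> h = (if fell_after_reaching lam K c h then 1
    else if reached lam K h then min 1 (exp (c - lam h)) else exp (c - K))" for h
  have "act_prob True (lam h) * \<Phi> (True # h) + act_prob False (lam h) * \<Phi> (False # h) \<le> \<Phi> h" for h
  proof (cases "fell_after_reaching lam K c h")
    case True
    then show ?thesis by (intro act_prob_convex_le) (simp_all add: \<Phi>_def)
  next
    case not_fell: False
    show ?thesis
    proof (cases "reached lam K h")
      case True
      have \<Phi>_Cons: "\<Phi> (a # h) = min 1 (exp (c - lam (a # h)))" for a
        using True not_fell by (auto simp: \<Phi>_def simp del: belief.simps)
      have "act_prob True (lam h) * \<Phi> (True # h) + act_prob False (lam h) * \<Phi> (False # h)
          \<le> act_prob True (lam h) * exp (c - lam (True # h)) + act_prob False (lam h) * exp (c - lam (False # h))"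
        unfolding \<Phi>_Cons using act_prob_nonneg by (intro add_mono mult_left_mono) auto
      also have "\<dots> = exp c * (act_prob True (lam h) * exp (- (lam h + Dp (lam h)))
          + act_prob False (lam h) * exp (- (lam h + Dm (lam h))))"
        unfolding exp_diff_eq_mult by (simp add: distrib_left)
      also have "\<dots> = exp (c - lam h)" unfolding exp_neg_belief_martingale exp_diff_eq_mult ..
      finally show ?thesis
        using act_prob_convex_le[of "\<Phi> (True # h)" 1 "\<Phi> (False # h)"] True not_fell
        by (simp add: \<Phi>_Cons \<Phi>_def del: belief.simps)
    next
      case False
      have "\<Phi> (a # h) \<le> exp (c - K)" for a
        using False not_fell by (auto simp: \<Phi>_def min_le_iff_disj simp del: belief.simps)
      moreover have "\<Phi> h = exp (c - K)" using False not_fell by (simp add: \<Phi>_def)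
      ultimately show ?thesis by (simp add: act_prob_convex_le)
    qed
  qed
  then have "M.prob {\<omega>\<in>space M. hist \<omega> n \<in> {h. fell_after_reaching lam K c h}} \<le> \<Phi> []"
    by (intro prob_hist_le_supermartingale) (auto simp: \<Phi>_def)
  also have "\<Phi> [] \<le> exp (c - K)" using assms by (auto simp: \<Phi>_def min_le_iff_disj)
  finally show ?thesis .
qed

lemma stays_between_belief_bounds:
  "stays_between lam m K h \<Longrightarrow> 0 < m \<Longrightarrow> 0 < K \<Longrightarrow> - m < lam h \<and> lam h < K"
  by (cases h) (auto simp del: belief.simps(2))

lemma bhattacharyya_le_in_band:
  assumes "0 < m" "0 < K"
  obtains \<rho> where "0 < \<rho>" "\<rho> < 1"
    "\<And>x. - m < x \<Longrightarrow> x < K \<Longrightarrow> sqrt ((1 - Gp (- x)) * (1 - Gm (- x))) + sqrt (Gp (- x) * Gm (- x)) \<le> \<rho>"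
proof -
  define \<delta> where "\<delta> = min ((1 - exp (- K)) * Gm (- K)) ((exp m - 1) * (1 - Gm m))"
  have "0 < \<delta>" unfolding \<delta>_def using cdf_bounds[of "- K"] cdf_bounds[of m] assms by auto
  have "\<delta> \<le> (1 - exp (- K)) * Gm (- K)" unfolding \<delta>_def by simp
  also have "\<dots> \<le> 1" using cdf_bounds[of "- K"] by (intro mult_le_one) auto
  finally have "\<delta> \<le> 1" .
  show ?thesis
  proof
    show "0 < 1 - \<delta>^2 / 4" using \<open>0 < \<delta>\<close> \<open>\<delta> \<le> 1\<close> power_le_one[of \<delta> 2] by auto
    show "1 - \<delta>^2 / 4 < 1" using \<open>0 < \<delta>\<close> by simp
  next
    fix x assume "- m < x" "x < K"
    then have "\<delta> \<le> Gm (- x) - Gp (- x)" unfolding \<delta>_def by (rule cdf_gap_lower_bound[OF assms])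
    then have "\<delta>^2 \<le> (Gp (- x) - Gm (- x))^2"
      using power_mono[of \<delta> "Gm (- x) - Gp (- x)" 2] \<open>0 < \<delta>\<close> by (simp add: power2_commute)
    then show "sqrt ((1 - Gp (- x)) * (1 - Gm (- x))) + sqrt (Gp (- x) * Gm (- x)) \<le> 1 - \<delta>^2 / 4"
      using bernoulli_bhattacharyya_le[of "Gp (- x)" "Gm (- x)"] cdf_bounds[of "- x"] by auto
  qed
qed

text \<open>While l_t stays in a bounded band, the two states are separated at a uniform rate, so
  exp(-l_t / 2) / \<rho>^t is a supermartingale there.\<close>
lemma prob_stays_between_le:
  assumes "0 < m" "0 < K"
  obtains \<rho> where "0 < \<rho>" "\<rho> < 1"
    "\<And>n. M.prob {\<omega>\<in>space M. hist \<omega> n \<in> {h. stays_between lam m K h}} \<le> exp (K/2) * \<rho>^n"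
proof -
  obtain \<rho> where \<rho>: "0 < \<rho>" "\<rho> < 1" and contraction: "\<And>x. - m < x \<Longrightarrow> x < K \<Longrightarrow>
      sqrt ((1 - Gp (- x)) * (1 - Gm (- x))) + sqrt (Gp (- x) * Gm (- x)) \<le> \<rho>"
    using bhattacharyya_le_in_band[OF assms] by blast
  have "M.prob {\<omega>\<in>space M. hist \<omega> n \<in> {h. stays_between lam m K h}} \<le> exp (K/2) * \<rho>^n" for n
  proof -
    define C where "C = exp (K/2) * \<rho>^n"
    define \<Phi> where "\<Phi> h = (if stays_between lam m K h then C * exp (- lam h / 2) / \<rho>^length h else 0)" for h
    have "0 < C" unfolding C_def using \<rho> by simp
    have "M.prob {\<omega>\<in>space M. hist \<omega> n \<in> {h. stays_between lam m K h}} \<le> \<Phi> []"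
    proof (rule prob_hist_le_supermartingale)
      fix h assume "length h = n" "h \<in> {h. stays_between lam m K h}"
      then have "lam h < K" using stays_between_belief_bounds assms by auto
      then have "1 \<le> exp (K/2) * exp (- lam h / 2)" by (simp add: exp_add[symmetric])
      then show "1 \<le> \<Phi> h" using \<open>length h = n\<close> \<open>h \<in> _\<close> \<rho> by (simp add: \<Phi>_def C_def)
    next
      show "0 \<le> \<Phi> h" for h using \<open>0 < C\<close> \<rho> by (simp add: \<Phi>_def)
    next
      fix h
      show "act_prob True (lam h) * \<Phi> (True # h) + act_prob False (lam h) * \<Phi> (False # h) \<le> \<Phi> h"
      proof (cases "stays_between lam m K h")
        case True
        let ?x = "lam h" and ?C' = "C / \<rho>^Suc (length h)"
        have \<Phi>_Cons: "\<Phi> (a # h) \<le> ?C' * exp (- lam (a # h) / 2)" for a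
          using \<open>0 < C\<close> \<rho> by (simp add: \<Phi>_def del: belief.simps)
        have "act_prob True ?x * \<Phi> (True # h) + act_prob False ?x * \<Phi> (False # h)
           \<le> act_prob True ?x * (?C' * exp (- lam (True # h) / 2)) + act_prob False ?x * (?C' * exp (- lam (False # h) / 2))"
          by (intro add_mono mult_left_mono \<Phi>_Cons act_prob_nonneg)
        also have "\<dots> = ?C' * (act_prob True ?x * exp (- (?x + Dp ?x) / 2) + act_prob False ?x * exp (- (?x + Dm ?x) / 2))"
          by (simp add: algebra_simps)
        also have "\<dots> \<le> ?C' * exp (- ?x / 2) * \<rho>"
          unfolding exp_neg_half_belief_step mult.assoc
          using contraction stays_between_belief_bounds[OF True assms] \<open>0 < C\<close> \<rho>
          by (intro mult_left_mono) auto
        also have "\<dots> = \<Phi> h" using True \<rho> by (simp add: \<Phi>_def)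
        finally show ?thesis .
      qed (simp add: \<Phi>_def)
    qed
    then show ?thesis by (simp add: \<Phi>_def C_def)
  qed
  with \<rho> show ?thesis using that by blast
qed

lemma prob_ever_fell_after_reaching_le:
  assumes "c < K"
  shows "{\<omega>\<in>space M. \<exists>n. fell_after_reaching lam K c (hist \<omega> n)} \<in> sets M"
    "M.prob {\<omega>\<in>space M. \<exists>n. fell_after_reaching lam K c (hist \<omega> n)} \<le> exp (c - K)"
proof -
  define E where "E n = {\<omega>\<in>space M. hist \<omega> n \<in> {h. fell_after_reaching lam K c h}}" for n
  have eq: "{\<omega>\<in>space M. \<exists>n. fell_after_reaching lam K c (hist \<omega> n)} = (\<Union>n. E n)"
    unfolding E_def by auto
  have E: "range E \<subseteq> sets M" unfolding E_def using sets_hist_in by blast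
  then show "{\<omega>\<in>space M. \<exists>n. fell_after_reaching lam K c (hist \<omega> n)} \<in> sets M"
    unfolding eq by blast
  have "incseq E" by (rule incseq_SucI) (auto simp: E_def simp del: belief.simps)
  then have "(\<lambda>n. M.prob (E n)) \<longlonglongrightarrow> M.prob (\<Union>n. E n)" by (rule M.finite_Lim_measure_incseq[OF E])
  moreover have "M.prob (E n) \<le> exp (c - K)" for n
    unfolding E_def by (rule prob_fell_after_reaching_le[OF assms])
  ultimately show "M.prob {\<omega>\<in>space M. \<exists>n. fell_after_reaching lam K c (hist \<omega> n)} \<le> exp (c - K)"
    unfolding eq by (intro LIMSEQ_le_const2) auto
qed

lemma prob_always_stays_between:
  assumes "0 < m" "0 < K"
  shows "{\<omega>\<in>space M. \<forall>n. stays_between lam m K (hist \<omega> n)} \<in> sets M"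
    "M.prob {\<omega>\<in>space M. \<forall>n. stays_between lam m K (hist \<omega> n)} = 0"
proof -
  define E where "E n = {\<omega>\<in>space M. hist \<omega> n \<in> {h. stays_between lam m K h}}" for n
  have eq: "{\<omega>\<in>space M. \<forall>n. stays_between lam m K (hist \<omega> n)} = (\<Inter>n. E n)"
    unfolding E_def by auto
  have E: "E n \<in> sets M" for n unfolding E_def using sets_hist_in by blast
  then show "{\<omega>\<in>space M. \<forall>n. stays_between lam m K (hist \<omega> n)} \<in> sets M" unfolding eq by blast
  obtain \<rho> where \<rho>: "0 < \<rho>" "\<rho> < 1" and bound: "\<And>n. M.prob (E n) \<le> exp (K/2) * \<rho>^n"
    using prob_stays_between_le[OF assms] unfolding E_def by blast
  have "M.prob (\<Inter>n. E n) \<le> exp (K/2) * \<rho>^n" for n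
    using M.finite_measure_mono[of "\<Inter>n. E n" "E n"] E bound[of n] by (meson INT_lower UNIV_I order_trans)
  moreover have "(\<lambda>n. exp (K/2) * \<rho>^n) \<longlonglongrightarrow> 0"
    using \<rho> by (intro tendsto_mult_right_zero LIMSEQ_power_zero) auto
  ultimately have "M.prob (\<Inter>n. E n) \<le> 0" by (intro LIMSEQ_le_const[of "\<lambda>n. exp (K/2) * \<rho>^n" 0]) auto
  then show "M.prob {\<omega>\<in>space M. \<forall>n. stays_between lam m K (hist \<omega> n)} = 0"
    unfolding eq using measure_nonneg[of M "\<Inter>n. E n"] by linarith
qed

lemma AE_belief_eventually_gt: "AE \<omega> in M. \<exists>N. \<forall>n\<ge>N. c < lam (hist \<omega> n)"
proof -
  define K where "K k = \<bar>c\<bar> + real k + 1" for k :: nat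
  define bad where "bad k = {\<omega>\<in>space M. \<exists>n. fell_after_reaching lam 0 (- (real k + 1)) (hist \<omega> n)}
    \<union> {\<omega>\<in>space M. \<forall>n. stays_between lam (real k + 1) (K k) (hist \<omega> n)}
    \<union> {\<omega>\<in>space M. \<exists>n. fell_after_reaching lam (K k) c (hist \<omega> n)}" for k
  have K: "0 < K k" "c < K k" "c - K k \<le> - (real k + 1)" for k by (auto simp: K_def)
  have bad: "bad k \<in> sets M" "M.prob (bad k) \<le> 2 * exp (- (real k + 1))" for k
  proof -
    note A = prob_ever_fell_after_reaching_le[of "- (real k + 1)" 0]
      and B = prob_always_stays_between[of "real k + 1" "K k"]
      and C = prob_ever_fell_after_reaching_le[OF K(2)[of k]]
    show "bad k \<in> sets M" using A B C K by (simp add: bad_def)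
    have "M.prob (bad k) \<le> exp (- (real k + 1)) + 0 + exp (c - K k)"
      unfolding bad_def using A B C K[of k]
      by (intro order_trans[OF measure_Un_le] add_mono) (auto intro!: measure_Un_le)
    also have "\<dots> \<le> 2 * exp (- (real k + 1))" using K(3)[of k] by simp
    finally show "M.prob (bad k) \<le> 2 * exp (- (real k + 1))" .
  qed
  have "(\<lambda>k. 2 * exp (- (real k + 1))) \<longlonglongrightarrow> 0" by real_asymp
  moreover have "M.prob (\<Inter>k. bad k) \<le> 2 * exp (- (real k + 1))" for k
    using bad M.finite_measure_mono[of "\<Inter>k. bad k" "bad k"] by (meson INT_lower UNIV_I order_trans)
  ultimately have "M.prob (\<Inter>k. bad k) \<le> 0"
    by (intro LIMSEQ_le_const[of "\<lambda>k. 2 * exp (- (real k + 1))" 0]) auto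
  then have "M.prob (\<Inter>k. bad k) = 0" using measure_nonneg[of M "\<Inter>k. bad k"] by linarith
  then have "(\<Inter>k. bad k) \<in> null_sets M"
    using bad(1) M.emeasure_eq_measure by (auto simp: null_sets_def)
  moreover have "{\<omega>\<in>space M. \<not> (\<exists>N. \<forall>n\<ge>N. c < lam (hist \<omega> n))} \<subseteq> (\<Inter>k. bad k)"
  proof (intro subsetI INT_I)
    fix \<omega> k assume "\<omega> \<in> {\<omega>\<in>space M. \<not> (\<exists>N. \<forall>n\<ge>N. c < lam (hist \<omega> n))}"
    then have "\<omega> \<in> space M" "\<And>N. \<exists>n\<ge>N. lam (hist \<omega> n) \<le> c" by (auto simp: not_less)
    from low_infinitely_often_cases[OF belief.simps(1) _ this(2), of "real k + 1" "K k"] this(1)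
    show "\<omega> \<in> bad k" by (auto simp: bad_def)
  qed
  ultimately show ?thesis by (rule AE_I')
qed

lemma eventually_plus_steps:
  assumes "eventually (\<lambda>n. 0 < pub_llr Gp Gm L n) sequentially"
  shows "eventually (\<lambda>n. pub_llr Gp Gm L (Suc n) = pub_llr Gp Gm L n + Dp (pub_llr Gp Gm L n)) sequentially"
  using assms[THEN eventually_sequentially_Suc[THEN iffD2]] eventually_gt_at_top[of 0]
proof eventually_elim
  case (elim n)
  then show ?case using Dminus_le[of "pub_llr Gp Gm L n"] by (auto simp: Let_def split: if_splits)
qed

lemma AE_pub_llr_ratio_tendsto_1:
  fixes f :: "real \<Rightarrow> real"
  assumes convex: "convex_on {..<x0} Gm" and f_pos: "\<forall>t>0. f t > 0"
    and f_ode: "\<forall>\<^sub>F t in at_top. (f has_real_derivative Gm (- f t)) (at t)"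
  shows "AE \<omega> in M. (\<lambda>t. pub_llr Gp Gm (\<lambda>n. Lf (s n \<omega>)) t / f (real t)) \<longlonglongrightarrow> 1"
proof -
  obtain T1 where T1: "\<And>t. T1 \<le> t \<Longrightarrow> (f has_real_derivative Gm (- f t)) (at t)"
    using f_ode by (auto simp: eventually_at_top_linorder)
  interpret ode: antitone_rate_ode f "\<lambda>x. Gm (- x)" "max T1 1"
    using T1 f_pos cdf_bounds(3,4) Gm_mono by unfold_locales (auto simp: less_imp_le)
  have "AE \<omega> in M. \<forall>c::nat. \<exists>N. \<forall>n\<ge>N. real c < lam (hist \<omega> n)"
    by (simp add: AE_all_countable AE_belief_eventually_gt)
  then show ?thesis
  proof (rule eventually_mono)
    fix \<omega> assume high: "\<forall>c::nat. \<exists>N. \<forall>n\<ge>N. real c < lam (hist \<omega> n)"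
    define y where "y = pub_llr Gp Gm (\<lambda>n. Lf (s n \<omega>))"
    have "filterlim (\<lambda>n. y (Suc n)) at_top sequentially"
      unfolding filterlim_at_top_dense eventually_sequentially y_def pub_llr_Suc_eq_belief
    proof
      fix Z :: real
      obtain N where "\<forall>n\<ge>N. real (nat \<lceil>Z\<rceil>) < lam (hist \<omega> n)" using high by blast
      moreover have "Z \<le> real (nat \<lceil>Z\<rceil>)" by linarith
      ultimately show "\<exists>N. \<forall>n\<ge>N. Z < lam (hist \<omega> n)" by force
    qed
    then have y_lim: "filterlim y at_top sequentially" by (simp add: filterlim_sequentially_Suc)
    then have "eventually (\<lambda>n. 0 < y n) sequentially" by (simp add: filterlim_at_top_dense)
    then have "eventually (\<lambda>n. y (Suc n) = y n + Dp (y n)) sequentially"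
      unfolding y_def by (rule eventually_plus_steps)
    from ode.tendsto_of_recursion[OF this y_lim eventually_Dplus_pos eventually_Dplus_ge
        eventually_Dplus_le[OF convex]]
    show "(\<lambda>t. pub_llr Gp Gm (\<lambda>n. Lf (s n \<omega>)) t / f (real t)) \<longlonglongrightarrow> 1" by (simp add: y_def)
  qed
qed

end

theorem theorem3:
  fixes Fp Fm :: "real measure"
    and Lf :: "real \<Rightarrow> real"
    and M :: "'a measure"
    and s :: "nat \<Rightarrow> 'a \<Rightarrow> real"
    and f :: "real \<Rightarrow> real"
  assumes Fp_prob: "prob_space Fp" and Fp_sets: "sets Fp = sets borel"
    and Fm_prob: "prob_space Fm" and Fm_sets: "sets Fm = sets borel"
    and mutual_ac: "absolutely_continuous Fm Fp" "absolutely_continuous Fp Fm"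
    and Lf_meas: "Lf \<in> borel_measurable borel"
    and Lf_llr: "Fp = density Fm (\<lambda>x. ennreal (exp (Lf x)))"
    and unbounded: "\<forall>B::real.
        (measure Fp {x. Lf x > B} + measure Fm {x. Lf x > B}) / 2 > 0 \<and>
        (measure Fp {x. Lf x < - B} + measure Fm {x. Lf x < - B}) / 2 > 0"
    and M_prob: "prob_space M"
    and s_indep: "prob_space.indep_vars M (\<lambda>_. borel) s UNIV"
    and s_distr: "\<forall>i. distr M borel (s i) = Fp"
    and Gp_cont: "continuous_on UNIV (llr_cdf Fp Lf)"
    and Gm_cont: "continuous_on UNIV (llr_cdf Fm Lf)"
    and Gm_tail: "\<exists>x0. convex_on {..<x0} (llr_cdf Fm Lf) \<and>
                        (\<forall>x<x0. llr_cdf Fm Lf differentiable (at x))"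
    and f_pos: "\<forall>t>0. f t > 0"
    and f_ode: "\<forall>\<^sub>F t in at_top.
                  (f has_real_derivative (llr_cdf Fm Lf (- f t))) (at t)"
  shows "AE \<omega> in M.
     ((\<lambda>t. pub_llr (llr_cdf Fp Lf) (llr_cdf Fm Lf) (\<lambda>n. Lf (s n \<omega>)) t / f (real t))
        \<longlongrightarrow> 1) sequentially"
proof -
  interpret social_learning Fp Fm Lf M s
    unfolding social_learning_def
    using Fp_prob Fp_sets Fm_prob Fm_sets mutual_ac Lf_meas Lf_llr unbounded M_prob s_indep s_distr
    by blast
  obtain x0 where "convex_on {..<x0} (llr_cdf Fm Lf)" using Gm_tail by blast
  then show ?thesis using f_pos f_ode by (rule AE_pub_llr_ratio_tendsto_1)
qed

end
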